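(* Let $\mathcal C,\mathcal D\subseteq\{0,1\}^n$ be neural codes. Then $CF(J_{\mathcal C\cup\mathcal D})=\{h_R : h\in MP(\mathcal C,\mathcal D)\}$.
   Context: All polynomials lie in $\mathbb F_2[x_1,\dots,x_n]$. A pseudo-monomial is a polynomial $\prod_{i\in\sigma}x_i\prod_{j\in\tau}(1-x_j)$ with $\sigma,\tau\subseteq[n]$, $\sigma\cap\tau=\emptyset$. For $v\in\{0,1\}^n$ let $\rho_v=\prod_{v_i=1}x_i\prod_{v_j=0}(1-x_j)$. For a code $\mathcal C\subseteq\{0,1\}^n$, the neural ideal is $J_\mathcal C=\langle\rho_v : v\in\{0,1\}^n\setminus\mathcal C\rangle$. A pseudo-monomial $f\in J_\mathcal C$ is minimal if there is no pseudo-monomial $g\in J_\mathcal C$ of smaller degree with $f=gh$ for some polynomial $h$; the canonical form $CF(J_\mathcal C)$ is the set of all minimal pseudo-monomials in $J_\mathcal C$. A polynomial is square-free if it is a sum of monomials $x^\alpha$ with all $\alpha_i\in\{0,1\}$; every polynomial $h$ has a unique square-free polynomial $h_R$ agreeing with it as a function on $\{0,1\}^n$ (equivalently, congruent to $h$ modulo $\langle x_i^2-x_i\rangle$). If $CF(J_\mathcal C)=\{f_1,\dots,f_r\}$ and $CF(J_\mathcal D)=\{g_1,\dots,g_s\}$, the set of reduced products is $P(\mathcal C,\mathcal D)=\{(f_ig_j)_R : i\in[r], j\in[s]\}$ and the minimal reduced products are $MP(\mathcal C,\mathcal D)=\{h\in P(\mathcal C,\mathcal D): h\neq0 \text{ and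 } h\neq fg \text{ for every } f\in P(\mathcal C,\mathcal D) \text{ and every polynomial } g\neq1\}$. *)

theory Defs
  imports "HOL-Library.Poly_Mapping" "HOL-Library.Z2"
begin

text \<open>Polynomials over F2 = bit: finitely supported maps from monomials
(exponent vectors) to coefficients. Variables are x_1..x_n.\<close>

type_synonym mpoly2 = "(nat \<Rightarrow>\<^sub>0 nat) \<Rightarrow>\<^sub>0 bit"

definition Var :: "nat \<Rightarrow> mpoly2" where
  "Var i = Poly_Mapping.single (Poly_Mapping.single i 1) 1"

definition polys :: "nat \<Rightarrow> mpoly2 set" where
  "polys n = {p. \<forall>m \<in> Poly_Mapping.keys p. Poly_Mapping.keys m \<subseteq> {1..n}}"

definition tdeg :: "mpoly2 \<Rightarrow> nat" where
  "tdeg p = Max (insert 0 ((\<lambda>m. \<Sum>i\<in>Poly_Mapping.keys m. Poly_Mapping.lookup m i) ` Poly_Mapping.keys p))"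

text \<open>Points of {0,1}^n are encoded by their supports v \<subseteq> {1..n}
  (v_i = 1 iff i \<in> v).\<close>
definition cube :: "nat \<Rightarrow> nat set set" where
  "cube n = {v. v \<subseteq> {1..n}}"

definition eval :: "mpoly2 \<Rightarrow> nat set \<Rightarrow> bit" where
  "eval p v = (\<Sum>m\<in>Poly_Mapping.keys p. Poly_Mapping.lookup p m *
       (\<Prod>i\<in>Poly_Mapping.keys m. (if i \<in> v then 1 else 0) ^ Poly_Mapping.lookup m i))"

definition pseudo_mono :: "nat set \<Rightarrow> nat set \<Rightarrow> mpoly2" where
  "pseudo_mono \<sigma> \<tau> = (\<Prod>i\<in>\<sigma>. Var i) * (\<Prod>j\<in>\<tau>. 1 - Var j)"

definition is_pseudo_monomial :: "nat \<Rightarrow> mpoly2 \<Rightarrow> bool" where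
  "is_pseudo_monomial n f \<longleftrightarrow>
     (\<exists>\<sigma> \<tau>. \<sigma> \<subseteq> {1..n} \<and> \<tau> \<subseteq> {1..n} \<and> \<sigma> \<inter> \<tau> = {} \<and> f = pseudo_mono \<sigma> \<tau>)"

definition rho :: "nat \<Rightarrow> nat set \<Rightarrow> mpoly2" where
  "rho n v = pseudo_mono v ({1..n} - v)"

definition ideal_gen :: "nat \<Rightarrow> mpoly2 set \<Rightarrow> mpoly2 set" where
  "ideal_gen n S = {p. \<exists>F c. finite F \<and> F \<subseteq> S \<and> (\<forall>g\<in>F. c g \<in> polys n) \<and>
                              p = (\<Sum>g\<in>F. c g * g)}"

definition neural_ideal :: "nat \<Rightarrow> nat set set \<Rightarrow> mpoly2 set" where
  "neural_ideal n C = ideal_gen n (rho n ` (cube n - C))"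

definition canonical_form :: "nat \<Rightarrow> nat set set \<Rightarrow> mpoly2 set" where
  "canonical_form n C = {f. is_pseudo_monomial n f \<and> f \<in> neural_ideal n C \<and>
      \<not> (\<exists>g h. is_pseudo_monomial n g \<and> g \<in> neural_ideal n C \<and> tdeg g < tdeg f \<and>
              h \<in> polys n \<and> f = g * h)}"

definition square_free :: "mpoly2 \<Rightarrow> bool" where
  "square_free p \<longleftrightarrow> (\<forall>m\<in>Poly_Mapping.keys p. \<forall>i. Poly_Mapping.lookup m i \<le> 1)"

text \<open>h_R: the unique square-free polynomial agreeing with h on {0,1}^n.\<close>
definition reduce :: "nat \<Rightarrow> mpoly2 \<Rightarrow> mpoly2" where
  "reduce n h = (THE r. r \<in> polys n \<and> square_free r \<and> (\<forall>v\<in>cube n. eval r v = eval h v))"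

definition reduced_products :: "nat \<Rightarrow> nat set set \<Rightarrow> nat set set \<Rightarrow> mpoly2 set" where
  "reduced_products n C D =
     {reduce n (f * g) | f g. f \<in> canonical_form n C \<and> g \<in> canonical_form n D}"

definition min_reduced_products :: "nat \<Rightarrow> nat set set \<Rightarrow> nat set set \<Rightarrow> mpoly2 set" where
  "min_reduced_products n C D =
     {h \<in> reduced_products n C D. h \<noteq> 0 \<and>
        (\<forall>f\<in>reduced_products n C D. \<forall>g\<in>polys n. g \<noteq> 1 \<longrightarrow> h \<noteq> f * g)}"

end

theory Submission
  imports Defs
begin

text \<open>A pseudo-monomial \<open>pseudo_mono \<sigma> \<tau>\<close> is the indicator function of the box of points
  containing \<sigma> and missing \<tau>, and square-free polynomials are determined by their values on the
  cube; hence the pseudo-monomial lies in \<open>J\<^sub>C\<close> exactly when its box avoids \<open>C\<close>, it divides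
  another pseudo-monomial exactly when its box is larger, and \<open>CF(J\<^sub>C)\<close> consists of the
  pseudo-monomials of the inclusion-minimal pairs \<open>(\<sigma>, \<tau>)\<close> whose box avoids \<open>C\<close>. A box avoids
  \<open>C \<union> D\<close> iff it avoids both codes, and the reduced product of two pseudo-monomials is the
  pseudo-monomial of the union pair (or 0). So minimal pairs for \<open>C \<union> D\<close> are exactly the minimal
  union pairs.\<close>

(* Otherwise the simplifier turns ring arithmetic on bit into xor and conjunction. *)
declare add_bit_eq_xor [simp del] mult_bit_eq_and [simp del]

definition set_monomial :: "nat set \<Rightarrow> (nat \<Rightarrow>\<^sub>0 nat)" where
  "set_monomial S = (\<Sum>i\<in>S. Poly_Mapping.single i 1)"

lemma lookup_set_monomial:
  "finite S \<Longrightarrow> Poly_Mapping.lookup (set_monomial S) i = (if i \<in> S then 1 else 0)"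
  by (simp add: set_monomial_def lookup_sum lookup_single when_def)

lemma keys_set_monomial: "finite S \<Longrightarrow> Poly_Mapping.keys (set_monomial S) = S"
  by (auto simp: in_keys_iff lookup_set_monomial split: if_splits)

lemma prod_Var: "finite S \<Longrightarrow> (\<Prod>i\<in>S. Var i) = Poly_Mapping.single (set_monomial S) 1"
  by (induction S rule: finite_induct) (simp_all add: Var_def mult_single set_monomial_def)

subsection \<open>Evaluation on the cube\<close>

definition monomial_value :: "nat set \<Rightarrow> (nat \<Rightarrow>\<^sub>0 nat) \<Rightarrow> bit" where
  "monomial_value v m = (if Poly_Mapping.keys m \<subseteq> v then 1 else 0)"

lemma prod_point_power_eq_monomial_value:
  "(\<Prod>i\<in>Poly_Mapping.keys m. (if i \<in> v then 1 else 0) ^ Poly_Mapping.lookup m i) = monomial_value v m"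
proof (cases "Poly_Mapping.keys m \<subseteq> v")
  case True
  then show ?thesis by (auto simp: monomial_value_def intro!: prod.neutral)
next
  case False
  then obtain i where i: "i \<in> Poly_Mapping.keys m" "i \<notin> v" by auto
  then have "(if i \<in> v then 1 else 0) ^ Poly_Mapping.lookup m i = (0::bit)"
    by (simp add: in_keys_iff)
  with i False show ?thesis by (auto simp: monomial_value_def)
qed

lemma eval_eq_sum_monomial_value:
  "eval p v = (\<Sum>m\<in>Poly_Mapping.keys p. Poly_Mapping.lookup p m * monomial_value v m)"
  by (simp only: eval_def prod_point_power_eq_monomial_value)

lemma eval_eq_sum_superset:
  assumes "finite S" "Poly_Mapping.keys p \<subseteq> S"
  shows "eval p v = (\<Sum>m\<in>S. Poly_Mapping.lookup p m * monomial_value v m)"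
  unfolding eval_eq_sum_monomial_value
  by (rule sum.mono_neutral_left) (use assms in \<open>auto simp: in_keys_iff\<close>)

lemma eval_add: "eval (p + q) v = eval p v + eval q v"
proof -
  let ?S = "Poly_Mapping.keys p \<union> Poly_Mapping.keys q"
  have "eval (p + q) v = (\<Sum>m\<in>?S. Poly_Mapping.lookup (p + q) m * monomial_value v m)"
    by (rule eval_eq_sum_superset) (auto dest: keys_add[THEN subsetD])
  also have "\<dots> = eval p v + eval q v"
    by (simp add: lookup_add distrib_right sum.distrib eval_eq_sum_superset[of ?S])
  finally show ?thesis .
qed

lemma eval_zero [simp]: "eval 0 v = 0"
  by (simp add: eval_def)

lemma eval_single: "eval (Poly_Mapping.single m c) v = c * monomial_value v m"
  by (subst eval_eq_sum_superset[of "{m}"]) (auto simp: lookup_single)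

lemma eval_one [simp]: "eval 1 v = 1"
  using eval_single[of 0 1 v] by (simp add: monomial_value_def)

lemma eval_sum: "finite I \<Longrightarrow> eval (\<Sum>i\<in>I. f i) v = (\<Sum>i\<in>I. eval (f i) v)"
  by (induction I rule: finite_induct) (simp_all add: eval_add)

lemma eval_diff: "eval (p - q) v = eval p v - eval q v"
  by (metis add_diff_cancel diff_add_cancel eval_add)

lemma monomial_value_add: "monomial_value v (a + b) = monomial_value v a * monomial_value v b"
proof -
  have "Poly_Mapping.keys (a + b) = Poly_Mapping.keys a \<union> Poly_Mapping.keys b"
    by (auto simp: in_keys_iff lookup_add)
  then show ?thesis by (simp add: monomial_value_def)
qed

lemma eval_mult: "eval (p * q) v = eval p v * eval q v"
proof -
  let ?P = "Poly_Mapping.lookup p" and ?Q = "Poly_Mapping.lookup q"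
  have expand: "r = (\<Sum>m\<in>Poly_Mapping.keys r. Poly_Mapping.single m (Poly_Mapping.lookup r m))"
    for r :: mpoly2
    by (rule poly_mapping_eqI) (simp add: lookup_sum lookup_single when_def in_keys_iff)
  have "p * q = (\<Sum>a\<in>Poly_Mapping.keys p. \<Sum>b\<in>Poly_Mapping.keys q. Poly_Mapping.single (a + b) (?P a * ?Q b))"
    by (subst (1 2) expand) (simp add: sum_product mult_single)
  then have "eval (p * q) v = (\<Sum>a\<in>Poly_Mapping.keys p. \<Sum>b\<in>Poly_Mapping.keys q.
      (?P a * monomial_value v a) * (?Q b * monomial_value v b))"
    by (simp add: eval_sum eval_single monomial_value_add ac_simps)
  then show ?thesis
    by (simp add: eval_eq_sum_monomial_value sum_product)
qed

lemma eval_prod: "finite S \<Longrightarrow> eval (\<Prod>i\<in>S. f i) v = (\<Prod>i\<in>S. eval (f i) v)"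
  by (induction S rule: finite_induct) (simp_all add: eval_mult)

lemma eval_Var: "eval (Var i) v = (if i \<in> v then 1 else 0)"
  by (simp add: Var_def eval_single monomial_value_def)

lemma eval_pseudo_mono:
  assumes "finite \<sigma>" "finite \<tau>"
  shows "eval (pseudo_mono \<sigma> \<tau>) v = (if \<sigma> \<subseteq> v \<and> \<tau> \<inter> v = {} then 1 else 0)"
proof -
  have indicator_prod: "(\<Prod>i\<in>S. if P i then 1 else (0::bit)) = (if \<forall>i\<in>S. P i then 1 else 0)"
    if "finite S" for S :: "nat set" and P
    using that by (induction S rule: finite_induct) auto
  have "eval (1 - Var j) v = (if j \<notin> v then 1 else 0)" for j
    by (simp add: eval_diff eval_Var)
  then show ?thesis using assms
    by (auto simp: pseudo_mono_def eval_mult eval_prod eval_Var indicator_prod)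
qed

definition pm_pair :: "nat \<Rightarrow> nat set \<Rightarrow> nat set \<Rightarrow> bool" where
  "pm_pair n \<sigma> \<tau> \<longleftrightarrow> \<sigma> \<subseteq> {1..n} \<and> \<tau> \<subseteq> {1..n} \<and> \<sigma> \<inter> \<tau> = {}"

lemma pm_pairD:
  assumes "pm_pair n \<sigma> \<tau>"
  shows "finite \<sigma>" "finite \<tau>" "\<sigma> \<inter> \<tau> = {}"
  using assms finite_subset[OF _ finite_atLeastAtMost] by (auto simp: pm_pair_def)

lemma pm_pair_subset: "pm_pair n \<sigma> \<tau> \<Longrightarrow> \<sigma>' \<subseteq> \<sigma> \<Longrightarrow> \<tau>' \<subseteq> \<tau> \<Longrightarrow> pm_pair n \<sigma>' \<tau>'"
  unfolding pm_pair_def by blast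

lemma is_pseudo_monomial_iff: "is_pseudo_monomial n f \<longleftrightarrow> (\<exists>\<sigma> \<tau>. pm_pair n \<sigma> \<tau> \<and> f = pseudo_mono \<sigma> \<tau>)"
  unfolding is_pseudo_monomial_def pm_pair_def by blast

lemma one_minus_Var: "1 - Var j = Var j + 1"
proof -
  have "(1::mpoly2) + 1 = 0"
    by (metis one_add_one bit_2_eq_0 single_one single_add single_zero)
  then have "Var j + Var j = 0"
    by (metis distrib_left mult_1_right mult_zero_right)
  then show ?thesis by (simp add: algebra_simps)
qed

lemma pseudo_mono_eq_sum_single:
  assumes "finite \<sigma>" "finite \<tau>" "\<sigma> \<inter> \<tau> = {}"
  shows "pseudo_mono \<sigma> \<tau> = (\<Sum>m\<in>(\<lambda>A. set_monomial (\<sigma> \<union> A)) ` Pow \<tau>. Poly_Mapping.single m 1)"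
proof -
  have inj: "inj_on (\<lambda>A. set_monomial (\<sigma> \<union> A)) (Pow \<tau>)"
  proof (rule inj_onI)
    fix A B assume AB: "A \<in> Pow \<tau>" "B \<in> Pow \<tau>" "set_monomial (\<sigma> \<union> A) = set_monomial (\<sigma> \<union> B)"
    then have "\<sigma> \<union> A = \<sigma> \<union> B"
      using assms finite_subset by (metis PowD finite_Un keys_set_monomial)
    then show "A = B" using AB assms by blast
  qed
  have "(\<Prod>j\<in>\<tau>. 1 - Var j) = (\<Sum>A\<in>Pow \<tau>. (\<Prod>j\<in>A. Var j) * (\<Prod>j\<in>\<tau> - A. 1))"
    unfolding one_minus_Var by (rule prod_add) (rule assms)
  then have "pseudo_mono \<sigma> \<tau> = (\<Sum>A\<in>Pow \<tau>. (\<Prod>i\<in>\<sigma>. Var i) * (\<Prod>j\<in>A. Var j))"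
    by (simp add: pseudo_mono_def sum_distrib_left)
  also have "\<dots> = (\<Sum>A\<in>Pow \<tau>. Poly_Mapping.single (set_monomial (\<sigma> \<union> A)) 1)"
  proof (rule sum.cong[OF refl])
    fix A assume "A \<in> Pow \<tau>"
    then have "finite A" "\<sigma> \<inter> A = {}" using assms finite_subset by auto
    then have "(\<Prod>i\<in>\<sigma>. Var i) * (\<Prod>j\<in>A. Var j) = (\<Prod>i\<in>\<sigma> \<union> A. Var i)"
      using assms by (simp add: prod.union_disjoint)
    then show "(\<Prod>i\<in>\<sigma>. Var i) * (\<Prod>j\<in>A. Var j) = Poly_Mapping.single (set_monomial (\<sigma> \<union> A)) 1"
      using \<open>finite A\<close> assms by (simp add: prod_Var)
  qed
  finally show ?thesis by (simp add: sum.reindex[OF inj])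
qed

lemma keys_pseudo_mono:
  assumes "finite \<sigma>" "finite \<tau>" "\<sigma> \<inter> \<tau> = {}"
  shows "Poly_Mapping.keys (pseudo_mono \<sigma> \<tau>) = (\<lambda>A. set_monomial (\<sigma> \<union> A)) ` Pow \<tau>"
  using assms by (auto simp: pseudo_mono_eq_sum_single in_keys_iff lookup_sum lookup_single when_def)

lemma square_free_pseudo_mono:
  assumes "finite \<sigma>" "finite \<tau>" "\<sigma> \<inter> \<tau> = {}"
  shows "square_free (pseudo_mono \<sigma> \<tau>)"
  using assms by (auto simp: square_free_def keys_pseudo_mono lookup_set_monomial finite_subset)

lemma pseudo_mono_in_polys:
  assumes "pm_pair n \<sigma> \<tau>"
  shows "pseudo_mono \<sigma> \<tau> \<in> polys n"
  using assms pm_pairD[OF assms] finite_subset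
  by (fastforce simp: pm_pair_def polys_def keys_pseudo_mono keys_set_monomial)

lemma tdeg_pseudo_mono:
  assumes "finite \<sigma>" "finite \<tau>" "\<sigma> \<inter> \<tau> = {}"
  shows "tdeg (pseudo_mono \<sigma> \<tau>) = card \<sigma> + card \<tau>"
proof -
  have "(\<lambda>m. \<Sum>i\<in>Poly_Mapping.keys m. Poly_Mapping.lookup m i) ` Poly_Mapping.keys (pseudo_mono \<sigma> \<tau>)
      = (\<lambda>A. card (\<sigma> \<union> A)) ` Pow \<tau>"
    unfolding keys_pseudo_mono[OF assms] image_image
  proof (rule image_cong[OF refl])
    fix A assume "A \<in> Pow \<tau>"
    then have "finite (\<sigma> \<union> A)" using assms finite_subset by auto
    then show "(\<Sum>i\<in>Poly_Mapping.keys (set_monomial (\<sigma> \<union> A)). Poly_Mapping.lookup (set_monomial (\<sigma> \<union> A)) i)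
        = card (\<sigma> \<union> A)"
      by (simp add: keys_set_monomial lookup_set_monomial)
  qed
  then have "tdeg (pseudo_mono \<sigma> \<tau>) = Max (insert 0 ((\<lambda>A. card (\<sigma> \<union> A)) ` Pow \<tau>))"
    by (simp add: tdeg_def)
  also have "\<dots> = card (\<sigma> \<union> \<tau>)"
    using assms by (intro Max_eqI) (auto intro!: card_mono)
  also have "\<dots> = card \<sigma> + card \<tau>"
    using assms by (simp add: card_Un_disjoint)
  finally show ?thesis .
qed

lemma pseudo_mono_nonzero:
  assumes "finite \<sigma>" "finite \<tau>" "\<sigma> \<inter> \<tau> = {}"
  shows "pseudo_mono \<sigma> \<tau> \<noteq> 0"
proof
  assume "pseudo_mono \<sigma> \<tau> = 0"
  then have "eval (pseudo_mono \<sigma> \<tau>) \<sigma> = 0" by simp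
  then show False using assms by (simp add: eval_pseudo_mono inf_commute)
qed

lemma pseudo_mono_split:
  assumes "finite \<sigma>'" "finite \<tau>'" "\<sigma> \<subseteq> \<sigma>'" "\<tau> \<subseteq> \<tau>'"
  shows "pseudo_mono \<sigma>' \<tau>' = pseudo_mono \<sigma> \<tau> * pseudo_mono (\<sigma>' - \<sigma>) (\<tau>' - \<tau>)"
proof -
  have "(\<Prod>i\<in>\<sigma>'. Var i) = (\<Prod>i\<in>\<sigma>' - \<sigma>. Var i) * (\<Prod>i\<in>\<sigma>. Var i)"
    "(\<Prod>i\<in>\<tau>'. 1 - Var i) = (\<Prod>i\<in>\<tau>' - \<tau>. 1 - Var i) * (\<Prod>i\<in>\<tau>. 1 - Var i)"
    using assms by (auto intro: prod.subset_diff)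
  then show ?thesis by (simp add: pseudo_mono_def ac_simps)
qed

text \<open>Evaluate at \<open>\<sigma>'\<close> and at \<open>(\<sigma>' \<union> \<tau>) - \<tau>'\<close>, two points where the multiple is 1.\<close>

lemma pseudo_mono_dvd_imp_subset:
  assumes "finite \<sigma>" "finite \<tau>" "finite \<sigma>'" "finite \<tau>'" "\<sigma>' \<inter> \<tau>' = {}"
    and "pseudo_mono \<sigma>' \<tau>' = pseudo_mono \<sigma> \<tau> * h"
  shows "\<sigma> \<subseteq> \<sigma>' \<and> \<tau> \<subseteq> \<tau>'"
proof -
  have "\<sigma> \<subseteq> w \<and> \<tau> \<inter> w = {}" if "\<sigma>' \<subseteq> w" "\<tau>' \<inter> w = {}" for w
  proof -
    have "eval (pseudo_mono \<sigma>' \<tau>') w = 1"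
      using that assms(3-5) by (simp add: eval_pseudo_mono)
    then have "eval (pseudo_mono \<sigma> \<tau>) w * eval h w = 1"
      by (simp only: assms(6) eval_mult)
    then show ?thesis
      using assms(1,2) by (auto simp: eval_pseudo_mono split: if_splits)
  qed
  from this[of \<sigma>'] this[of "(\<sigma>' \<union> \<tau>) - \<tau>'"] show ?thesis
    using assms(5) by blast
qed

lemma pseudo_mono_eq_one_iff:
  assumes "finite \<sigma>" "finite \<tau>"
  shows "pseudo_mono \<sigma> \<tau> = 1 \<longleftrightarrow> \<sigma> = {} \<and> \<tau> = {}"
proof
  assume "pseudo_mono \<sigma> \<tau> = 1"
  then have "pseudo_mono {} {} = pseudo_mono \<sigma> \<tau> * 1" by (simp add: pseudo_mono_def)
  then show "\<sigma> = {} \<and> \<tau> = {}"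
    using pseudo_mono_dvd_imp_subset[OF assms] by blast
qed (simp add: pseudo_mono_def)

subsection \<open>Square-free polynomials are determined by their values\<close>

lemma square_free_inj_on_keys: "square_free p \<Longrightarrow> inj_on Poly_Mapping.keys (Poly_Mapping.keys p)"
  unfolding square_free_def
  by (rule inj_onI, rule poly_mapping_eqI) (metis in_keys_iff le_eq_less_or_eq less_one)

text \<open>Evaluating at the support of a key with the fewest variables isolates that key.\<close>

lemma square_free_eq_0_if_vanishes:
  assumes "r \<in> polys n" "square_free r" "\<forall>v\<in>cube n. eval r v = 0"
  shows "r = 0"
proof (rule ccontr)
  assume "r \<noteq> 0"
  then obtain m where m: "m \<in> Poly_Mapping.keys r"
    and m_min: "\<And>m'. m' \<in> Poly_Mapping.keys r \<Longrightarrow> card (Poly_Mapping.keys m) \<le> card (Poly_Mapping.keys m')"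
    using ex_has_least_nat[of "\<lambda>m. m \<in> Poly_Mapping.keys r" _ "\<lambda>m. card (Poly_Mapping.keys m)"]
    by (metis all_not_in_conv keys_eq_empty)
  let ?v = "Poly_Mapping.keys m"
  have isolated: "monomial_value ?v m' = (if m' = m then 1 else 0)" if "m' \<in> Poly_Mapping.keys r" for m'
  proof -
    have "Poly_Mapping.keys m' \<subseteq> ?v \<longleftrightarrow> Poly_Mapping.keys m' = ?v"
      using m_min[OF that] card_seteq[OF finite_keys] by blast
    also have "\<dots> \<longleftrightarrow> m' = m"
      using inj_onD[OF square_free_inj_on_keys[OF assms(2)] _ that m] by blast
    finally show ?thesis by (simp add: monomial_value_def)
  qed
  have "eval r ?v = Poly_Mapping.lookup r m"
    using m unfolding eval_eq_sum_monomial_value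
    by (simp only: isolated cong: sum.cong)
      (simp only: mult.right_neutral mult_zero_right if_distrib[of "(*) _"] sum.delta finite_keys if_True)
  moreover have "?v \<in> cube n"
    using assms(1) m by (auto simp: polys_def cube_def)
  ultimately show False
    using assms(3) m by (simp add: in_keys_iff)
qed

lemma square_free_eqI:
  assumes "p \<in> polys n" "q \<in> polys n" "square_free p" "square_free q"
    and "\<forall>v\<in>cube n. eval p v = eval q v"
  shows "p = q"
proof -
  have "p - q = 0"
  proof (rule square_free_eq_0_if_vanishes)
    show "p - q \<in> polys n" "square_free (p - q)"
      using assms(1-4) keys_diff[of p q] unfolding polys_def square_free_def by blast+
    show "\<forall>v\<in>cube n. eval (p - q) v = 0"
      using assms(5) by (simp add: eval_diff)
  qed
  then show ?thesis by simp
qed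

lemma square_free_sum: "(\<And>i. i \<in> I \<Longrightarrow> square_free (f i)) \<Longrightarrow> square_free (\<Sum>i\<in>I. f i)"
  using keys_sum[of f I] unfolding square_free_def by blast

lemma sum_in_polys: "(\<And>i. i \<in> I \<Longrightarrow> f i \<in> polys n) \<Longrightarrow> (\<Sum>i\<in>I. f i) \<in> polys n"
  using keys_sum[of f I] unfolding polys_def by blast

lemma reduce_eqI:
  assumes "r \<in> polys n" "square_free r" "\<forall>v\<in>cube n. eval r v = eval h v"
  shows "reduce n h = r"
  unfolding reduce_def
proof (rule the_equality)
  show "r \<in> polys n \<and> square_free r \<and> (\<forall>v\<in>cube n. eval r v = eval h v)"
    using assms by blast
  show "r' = r" if "r' \<in> polys n \<and> square_free r' \<and> (\<forall>v\<in>cube n. eval r' v = eval h v)" for r'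
    using that assms by (auto intro: square_free_eqI)
qed

lemma reduce_pseudo_mono_mult:
  assumes "pm_pair n \<sigma>\<^sub>1 \<tau>\<^sub>1" "pm_pair n \<sigma>\<^sub>2 \<tau>\<^sub>2"
  shows "reduce n (pseudo_mono \<sigma>\<^sub>1 \<tau>\<^sub>1 * pseudo_mono \<sigma>\<^sub>2 \<tau>\<^sub>2) =
    (if (\<sigma>\<^sub>1 \<union> \<sigma>\<^sub>2) \<inter> (\<tau>\<^sub>1 \<union> \<tau>\<^sub>2) = {} then pseudo_mono (\<sigma>\<^sub>1 \<union> \<sigma>\<^sub>2) (\<tau>\<^sub>1 \<union> \<tau>\<^sub>2) else 0)"
proof -
  note fin = pm_pairD(1,2)[OF assms(1)] pm_pairD(1,2)[OF assms(2)]
  have eval_product: "eval (pseudo_mono \<sigma>\<^sub>1 \<tau>\<^sub>1 * pseudo_mono \<sigma>\<^sub>2 \<tau>\<^sub>2) v =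
      eval (pseudo_mono (\<sigma>\<^sub>1 \<union> \<sigma>\<^sub>2) (\<tau>\<^sub>1 \<union> \<tau>\<^sub>2)) v" for v
    using fin by (simp add: eval_mult eval_pseudo_mono) blast
  show ?thesis
  proof (cases "(\<sigma>\<^sub>1 \<union> \<sigma>\<^sub>2) \<inter> (\<tau>\<^sub>1 \<union> \<tau>\<^sub>2) = {}")
    case True
    then have "pm_pair n (\<sigma>\<^sub>1 \<union> \<sigma>\<^sub>2) (\<tau>\<^sub>1 \<union> \<tau>\<^sub>2)"
      using assms by (auto simp: pm_pair_def)
    with True fin show ?thesis
      by (auto intro!: reduce_eqI pseudo_mono_in_polys square_free_pseudo_mono simp: eval_product)
  next
    case False
    then have "eval (pseudo_mono \<sigma>\<^sub>1 \<tau>\<^sub>1 * pseudo_mono \<sigma>\<^sub>2 \<tau>\<^sub>2) v = 0" for v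
      using fin by (auto simp: eval_product eval_pseudo_mono)
    with False show ?thesis
      by (auto intro!: reduce_eqI simp: polys_def square_free_def)
  qed
qed

lemma reduce_pseudo_mono: "pm_pair n \<sigma> \<tau> \<Longrightarrow> reduce n (pseudo_mono \<sigma> \<tau>) = pseudo_mono \<sigma> \<tau>"
  using reduce_pseudo_mono_mult[of n \<sigma> \<tau> "{}" "{}"]
  by (simp add: pm_pair_def pseudo_mono_def)

subsection \<open>Pseudo-monomials in a neural ideal\<close>

lemma pm_pair_rho: "v \<in> cube n \<Longrightarrow> pm_pair n v ({1..n} - v)"
  by (auto simp: pm_pair_def cube_def)

lemma eval_rho:
  assumes "v \<in> cube n" "w \<in> cube n"
  shows "eval (rho n v) w = (if v = w then 1 else 0)"
proof -
  have "v \<subseteq> w \<and> ({1..n} - v) \<inter> w = {} \<longleftrightarrow> v = w"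
    using assms by (auto simp: cube_def)
  then show ?thesis
    using pm_pairD[OF pm_pair_rho[OF assms(1)]] by (simp add: rho_def eval_pseudo_mono)
qed

lemma inj_on_rho: "inj_on (rho n) (cube n)"
  by (rule inj_onI) (metis eval_rho zero_neq_one)

lemma finite_cube: "finite (cube n)"
  by (simp add: cube_def flip: Pow_def)

lemma pseudo_mono_eq_sum_rho:
  assumes "pm_pair n \<sigma> \<tau>"
  shows "pseudo_mono \<sigma> \<tau> = (\<Sum>v\<in>{v \<in> cube n. \<sigma> \<subseteq> v \<and> \<tau> \<inter> v = {}}. rho n v)"
    (is "_ = (\<Sum>v\<in>?B. rho n v)")
proof (rule square_free_eqI)
  note fin = pm_pairD[OF assms]
  show "pseudo_mono \<sigma> \<tau> \<in> polys n" "square_free (pseudo_mono \<sigma> \<tau>)"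
    using assms fin by (simp_all add: pseudo_mono_in_polys square_free_pseudo_mono)
  have "rho n v \<in> polys n \<and> square_free (rho n v)" if "v \<in> cube n" for v
    using pm_pair_rho[OF that] pm_pairD[OF pm_pair_rho[OF that]]
    by (simp add: rho_def pseudo_mono_in_polys square_free_pseudo_mono)
  then show "(\<Sum>v\<in>?B. rho n v) \<in> polys n" "square_free (\<Sum>v\<in>?B. rho n v)"
    by (auto intro!: sum_in_polys square_free_sum)
  show "\<forall>w\<in>cube n. eval (pseudo_mono \<sigma> \<tau>) w = eval (\<Sum>v\<in>?B. rho n v) w"
  proof
    fix w assume w: "w \<in> cube n"
    have "eval (\<Sum>v\<in>?B. rho n v) w = (\<Sum>v\<in>?B. if v = w then 1 else 0)"
      using finite_cube w by (simp add: eval_sum eval_rho)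
    also have "\<dots> = eval (pseudo_mono \<sigma> \<tau>) w"
      using finite_cube w fin by (simp add: eval_pseudo_mono)
    finally show "eval (pseudo_mono \<sigma> \<tau>) w = eval (\<Sum>v\<in>?B. rho n v) w" ..
  qed
qed

lemma eval_neural_ideal:
  assumes "C \<subseteq> cube n" "p \<in> neural_ideal n C" "c \<in> C"
  shows "eval p c = 0"
proof -
  obtain F f where F: "finite F" "F \<subseteq> rho n ` (cube n - C)" "p = (\<Sum>g\<in>F. f g * g)"
    using assms(2) unfolding neural_ideal_def ideal_gen_def by blast
  have "eval g c = 0" if g: "g \<in> F" for g
  proof -
    obtain v where "v \<in> cube n" "v \<notin> C" "g = rho n v"
      using g F(2) by blast
    then show ?thesis
      using assms(1,3) eval_rho[of v n c] by auto
  qed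
  then show ?thesis
    using F by (simp add: eval_sum eval_mult)
qed

definition avoids :: "nat set set \<Rightarrow> nat set \<Rightarrow> nat set \<Rightarrow> bool" where
  "avoids C \<sigma> \<tau> \<longleftrightarrow> (\<forall>c\<in>C. \<not> (\<sigma> \<subseteq> c \<and> \<tau> \<inter> c = {}))"

lemma avoids_mono:
  assumes "avoids C \<sigma> \<tau>" "\<sigma> \<subseteq> \<sigma>'" "\<tau> \<subseteq> \<tau>'"
  shows "avoids C \<sigma>' \<tau>'"
  unfolding avoids_def
proof (intro ballI notI)
  fix c assume "c \<in> C" "\<sigma>' \<subseteq> c \<and> \<tau>' \<inter> c = {}"
  moreover from this assms(2,3) have "\<sigma> \<subseteq> c" "\<tau> \<inter> c = {}" by blast+
  ultimately show False using assms(1) by (auto simp: avoids_def)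
qed

lemma avoids_Un [simp]: "avoids (C \<union> D) \<sigma> \<tau> \<longleftrightarrow> avoids C \<sigma> \<tau> \<and> avoids D \<sigma> \<tau>"
  unfolding avoids_def by (rule ball_Un)

lemma pseudo_mono_in_neural_ideal_iff:
  assumes "C \<subseteq> cube n" "pm_pair n \<sigma> \<tau>"
  shows "pseudo_mono \<sigma> \<tau> \<in> neural_ideal n C \<longleftrightarrow> avoids C \<sigma> \<tau>"
proof
  assume "pseudo_mono \<sigma> \<tau> \<in> neural_ideal n C"
  then show "avoids C \<sigma> \<tau>"
    using eval_neural_ideal[OF assms(1)] pm_pairD[OF assms(2)]
    by (fastforce simp: avoids_def eval_pseudo_mono)
next
  assume "avoids C \<sigma> \<tau>"
  let ?F = "rho n ` {v \<in> cube n. \<sigma> \<subseteq> v \<and> \<tau> \<inter> v = {}}"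
  have "?F \<subseteq> rho n ` (cube n - C)"
    using \<open>avoids C \<sigma> \<tau>\<close> by (auto simp: avoids_def)
  moreover have "pseudo_mono \<sigma> \<tau> = (\<Sum>g\<in>?F. (\<lambda>_. 1::mpoly2) g * g)"
    using pseudo_mono_eq_sum_rho[OF assms(2)] inj_on_subset[OF inj_on_rho]
    by (simp add: sum.reindex)
  moreover have "finite ?F" "\<forall>g\<in>?F. (\<lambda>_. 1::mpoly2) g \<in> polys n"
    using finite_cube by (simp_all add: polys_def)
  ultimately show "pseudo_mono \<sigma> \<tau> \<in> neural_ideal n C"
    unfolding neural_ideal_def ideal_gen_def mem_Collect_eq
    by (intro exI[of _ ?F] exI[of _ "\<lambda>_. 1::mpoly2"] conjI)
qed

subsection \<open>The canonical form as minimal avoiding pairs\<close>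

definition minimal_avoiding :: "nat set set \<Rightarrow> nat set \<Rightarrow> nat set \<Rightarrow> bool" where
  "minimal_avoiding C \<sigma> \<tau> \<longleftrightarrow> avoids C \<sigma> \<tau> \<and>
     (\<forall>\<sigma>' \<subseteq> \<sigma>. \<forall>\<tau>' \<subseteq> \<tau>. avoids C \<sigma>' \<tau>' \<longrightarrow> \<sigma>' = \<sigma> \<and> \<tau>' = \<tau>)"

lemma subset_pair_eq_if_card_le:
  assumes "finite \<sigma>" "finite \<tau>" "\<sigma>' \<subseteq> \<sigma>" "\<tau>' \<subseteq> \<tau>" "card \<sigma> + card \<tau> \<le> card \<sigma>' + card \<tau>'"
  shows "\<sigma>' = \<sigma> \<and> \<tau>' = \<tau>"
proof -
  have "card \<sigma>' = card \<sigma>" "card \<tau>' = card \<tau>"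
    using assms(5) card_mono[OF assms(1,3)] card_mono[OF assms(2,4)] by linarith+
  then show ?thesis
    using card_subset_eq[OF assms(1,3)] card_subset_eq[OF assms(2,4)] by blast
qed

lemma ex_minimal_avoiding:
  assumes "finite \<sigma>" "finite \<tau>" "avoids C \<sigma> \<tau>"
  obtains \<sigma>' \<tau>' where "\<sigma>' \<subseteq> \<sigma>" "\<tau>' \<subseteq> \<tau>" "minimal_avoiding C \<sigma>' \<tau>'"
proof -
  let ?P = "\<lambda>(\<sigma>', \<tau>'). \<sigma>' \<subseteq> \<sigma> \<and> \<tau>' \<subseteq> \<tau> \<and> avoids C \<sigma>' \<tau>'"
  obtain \<sigma>' \<tau>' where P: "?P (\<sigma>', \<tau>')"
    and least: "\<And>p. ?P p \<Longrightarrow> card \<sigma>' + card \<tau>' \<le> card (fst p) + card (snd p)"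
    using ex_has_least_nat[of ?P "(\<sigma>, \<tau>)" "\<lambda>p. card (fst p) + card (snd p)"] assms(3) by auto
  have fin: "finite \<sigma>'" "finite \<tau>'"
    using P assms(1,2) finite_subset by auto
  have "\<sigma>'' = \<sigma>' \<and> \<tau>'' = \<tau>'" if "\<sigma>'' \<subseteq> \<sigma>'" "\<tau>'' \<subseteq> \<tau>'" "avoids C \<sigma>'' \<tau>''" for \<sigma>'' \<tau>''
    using that P least[of "(\<sigma>'', \<tau>'')"] by (intro subset_pair_eq_if_card_le[OF fin]) auto
  with P have "minimal_avoiding C \<sigma>' \<tau>'"
    by (simp add: minimal_avoiding_def)
  with P that show ?thesis by blast
qed

lemma canonical_formE:
  assumes "f \<in> canonical_form n C"
  obtains \<sigma> \<tau> where "pm_pair n \<sigma> \<tau>" "f = pseudo_mono \<sigma> \<tau>"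
  using assms unfolding canonical_form_def is_pseudo_monomial_iff by blast

text \<open>Divisibility among pseudo-monomials is reverse inclusion of pairs, and the degree is the size
  of the pair, so degree-minimality in the canonical form is inclusion-minimality.\<close>

lemma pseudo_mono_in_canonical_form_iff:
  assumes "C \<subseteq> cube n" "pm_pair n \<sigma> \<tau>"
  shows "pseudo_mono \<sigma> \<tau> \<in> canonical_form n C \<longleftrightarrow> minimal_avoiding C \<sigma> \<tau>"
proof -
  note fin = pm_pairD[OF assms(2)]
  have divisor_iff: "(\<exists>g h. is_pseudo_monomial n g \<and> g \<in> neural_ideal n C \<and> tdeg g < tdeg (pseudo_mono \<sigma> \<tau>) \<and>
      h \<in> polys n \<and> pseudo_mono \<sigma> \<tau> = g * h) \<longleftrightarrow>
    \<not> (\<forall>\<sigma>' \<subseteq> \<sigma>. \<forall>\<tau>' \<subseteq> \<tau>. avoids C \<sigma>' \<tau>' \<longrightarrow> \<sigma>' = \<sigma> \<and> \<tau>' = \<tau>)"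
    (is "?divisor \<longleftrightarrow> ?smaller")
  proof
    assume ?divisor
    then obtain \<sigma>' \<tau>' h where pair: "pm_pair n \<sigma>' \<tau>'"
      and J: "pseudo_mono \<sigma>' \<tau>' \<in> neural_ideal n C"
      and deg: "tdeg (pseudo_mono \<sigma>' \<tau>') < tdeg (pseudo_mono \<sigma> \<tau>)"
      and eq: "pseudo_mono \<sigma> \<tau> = pseudo_mono \<sigma>' \<tau>' * h"
      unfolding is_pseudo_monomial_iff by blast
    note fin' = pm_pairD[OF pair]
    have "\<sigma>' \<subseteq> \<sigma>" "\<tau>' \<subseteq> \<tau>"
      using pseudo_mono_dvd_imp_subset[OF fin'(1,2) fin eq] by auto
    moreover have "avoids C \<sigma>' \<tau>'"
      using J pseudo_mono_in_neural_ideal_iff[OF assms(1) pair] by simp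
    moreover have "card \<sigma>' + card \<tau>' < card \<sigma> + card \<tau>"
      using deg by (simp add: tdeg_pseudo_mono fin fin')
    ultimately show ?smaller by auto
  next
    assume ?smaller
    then obtain \<sigma>' \<tau>' where sub: "\<sigma>' \<subseteq> \<sigma>" "\<tau>' \<subseteq> \<tau>" and av: "avoids C \<sigma>' \<tau>'"
      and proper: "\<not> (\<sigma>' = \<sigma> \<and> \<tau>' = \<tau>)" by blast
    have pair: "pm_pair n \<sigma>' \<tau>'" "pm_pair n (\<sigma> - \<sigma>') (\<tau> - \<tau>')"
      using assms(2) sub by (auto elim: pm_pair_subset)
    note fin' = pm_pairD[OF pair(1)]
    have "\<not> card \<sigma> + card \<tau> \<le> card \<sigma>' + card \<tau>'"
      using subset_pair_eq_if_card_le[OF fin(1,2) sub] proper by blast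
    then have "tdeg (pseudo_mono \<sigma>' \<tau>') < tdeg (pseudo_mono \<sigma> \<tau>)"
      by (simp add: tdeg_pseudo_mono fin fin')
    moreover have "is_pseudo_monomial n (pseudo_mono \<sigma>' \<tau>')"
      using pair(1) by (auto simp: is_pseudo_monomial_iff)
    moreover have "pseudo_mono \<sigma>' \<tau>' \<in> neural_ideal n C"
      using pseudo_mono_in_neural_ideal_iff[OF assms(1) pair(1)] av by blast
    moreover note pseudo_mono_in_polys[OF pair(2)] pseudo_mono_split[OF fin(1,2) sub]
    ultimately show ?divisor
      by (intro exI[of _ "pseudo_mono \<sigma>' \<tau>'"] exI[of _ "pseudo_mono (\<sigma> - \<sigma>') (\<tau> - \<tau>')"] conjI)
  qed
  have "is_pseudo_monomial n (pseudo_mono \<sigma> \<tau>)"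
    using assms(2) by (auto simp: is_pseudo_monomial_iff)
  then show ?thesis
    unfolding canonical_form_def mem_Collect_eq divisor_iff minimal_avoiding_def
      pseudo_mono_in_neural_ideal_iff[OF assms] by blast
qed

lemma reduced_productsE:
  assumes "C \<subseteq> cube n" "D \<subseteq> cube n" "h \<in> reduced_products n C D" "h \<noteq> 0"
  obtains \<sigma> \<tau> where "pm_pair n \<sigma> \<tau>" "avoids C \<sigma> \<tau>" "avoids D \<sigma> \<tau>" "h = pseudo_mono \<sigma> \<tau>"
proof -
  obtain f g where h: "h = reduce n (f * g)" and f: "f \<in> canonical_form n C" and g: "g \<in> canonical_form n D"
    using assms(3) unfolding reduced_products_def by blast
  obtain \<sigma>\<^sub>1 \<tau>\<^sub>1 \<sigma>\<^sub>2 \<tau>\<^sub>2 where pairs: "pm_pair n \<sigma>\<^sub>1 \<tau>\<^sub>1" "pm_pair n \<sigma>\<^sub>2 \<tau>\<^sub>2"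
    and fg: "f = pseudo_mono \<sigma>\<^sub>1 \<tau>\<^sub>1" "g = pseudo_mono \<sigma>\<^sub>2 \<tau>\<^sub>2"
    using f g by (elim canonical_formE)
  have "avoids C \<sigma>\<^sub>1 \<tau>\<^sub>1" "avoids D \<sigma>\<^sub>2 \<tau>\<^sub>2"
    using f g pseudo_mono_in_canonical_form_iff assms(1,2) pairs fg
    by (auto simp: minimal_avoiding_def)
  then have "avoids C (\<sigma>\<^sub>1 \<union> \<sigma>\<^sub>2) (\<tau>\<^sub>1 \<union> \<tau>\<^sub>2)" "avoids D (\<sigma>\<^sub>1 \<union> \<sigma>\<^sub>2) (\<tau>\<^sub>1 \<union> \<tau>\<^sub>2)"
    by (auto elim: avoids_mono)
  moreover have disjoint: "(\<sigma>\<^sub>1 \<union> \<sigma>\<^sub>2) \<inter> (\<tau>\<^sub>1 \<union> \<tau>\<^sub>2) = {}"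
    and "h = pseudo_mono (\<sigma>\<^sub>1 \<union> \<sigma>\<^sub>2) (\<tau>\<^sub>1 \<union> \<tau>\<^sub>2)"
    using assms(4) reduce_pseudo_mono_mult[OF pairs] by (auto simp: h fg split: if_splits)
  moreover have "pm_pair n (\<sigma>\<^sub>1 \<union> \<sigma>\<^sub>2) (\<tau>\<^sub>1 \<union> \<tau>\<^sub>2)"
    using pairs disjoint by (auto simp: pm_pair_def)
  ultimately show ?thesis using that by blast
qed

lemma reduced_product_below:
  assumes "C \<subseteq> cube n" "D \<subseteq> cube n" "pm_pair n \<sigma> \<tau>" "avoids C \<sigma> \<tau>" "avoids D \<sigma> \<tau>"
  obtains \<sigma>' \<tau>' where "\<sigma>' \<subseteq> \<sigma>" "\<tau>' \<subseteq> \<tau>" "pseudo_mono \<sigma>' \<tau>' \<in> reduced_products n C D"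
    "avoids C \<sigma>' \<tau>'" "avoids D \<sigma>' \<tau>'"
proof -
  note fin = pm_pairD(1,2)[OF assms(3)]
  obtain \<sigma>\<^sub>1 \<tau>\<^sub>1 where sub1: "\<sigma>\<^sub>1 \<subseteq> \<sigma>" "\<tau>\<^sub>1 \<subseteq> \<tau>" and min1: "minimal_avoiding C \<sigma>\<^sub>1 \<tau>\<^sub>1"
    using ex_minimal_avoiding[OF fin assms(4)] .
  obtain \<sigma>\<^sub>2 \<tau>\<^sub>2 where sub2: "\<sigma>\<^sub>2 \<subseteq> \<sigma>" "\<tau>\<^sub>2 \<subseteq> \<tau>" and min2: "minimal_avoiding D \<sigma>\<^sub>2 \<tau>\<^sub>2"
    using ex_minimal_avoiding[OF fin assms(5)] .
  have pairs: "pm_pair n \<sigma>\<^sub>1 \<tau>\<^sub>1" "pm_pair n \<sigma>\<^sub>2 \<tau>\<^sub>2"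
    using assms(3) sub1 sub2 by (auto elim: pm_pair_subset)
  have "(\<sigma>\<^sub>1 \<union> \<sigma>\<^sub>2) \<inter> (\<tau>\<^sub>1 \<union> \<tau>\<^sub>2) = {}"
    using assms(3) sub1 sub2 by (auto simp: pm_pair_def)
  then have "reduce n (pseudo_mono \<sigma>\<^sub>1 \<tau>\<^sub>1 * pseudo_mono \<sigma>\<^sub>2 \<tau>\<^sub>2) = pseudo_mono (\<sigma>\<^sub>1 \<union> \<sigma>\<^sub>2) (\<tau>\<^sub>1 \<union> \<tau>\<^sub>2)"
    by (simp add: reduce_pseudo_mono_mult[OF pairs])
  moreover have "pseudo_mono \<sigma>\<^sub>1 \<tau>\<^sub>1 \<in> canonical_form n C" "pseudo_mono \<sigma>\<^sub>2 \<tau>\<^sub>2 \<in> canonical_form n D"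
    using min1 min2 pseudo_mono_in_canonical_form_iff assms(1,2) pairs by blast+
  ultimately have "pseudo_mono (\<sigma>\<^sub>1 \<union> \<sigma>\<^sub>2) (\<tau>\<^sub>1 \<union> \<tau>\<^sub>2) \<in> reduced_products n C D"
    unfolding reduced_products_def by (metis (mono_tags, lifting) mem_Collect_eq)
  moreover have "avoids C (\<sigma>\<^sub>1 \<union> \<sigma>\<^sub>2) (\<tau>\<^sub>1 \<union> \<tau>\<^sub>2)" "avoids D (\<sigma>\<^sub>1 \<union> \<sigma>\<^sub>2) (\<tau>\<^sub>1 \<union> \<tau>\<^sub>2)"
    using min1 min2 by (auto simp: minimal_avoiding_def elim: avoids_mono)
  moreover have "\<sigma>\<^sub>1 \<union> \<sigma>\<^sub>2 \<subseteq> \<sigma>" "\<tau>\<^sub>1 \<union> \<tau>\<^sub>2 \<subseteq> \<tau>"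
    using sub1 sub2 by auto
  ultimately show ?thesis using that by blast
qed

lemma canonical_form_Un_subset_min_reduced_products:
  assumes "C \<subseteq> cube n" "D \<subseteq> cube n"
  shows "canonical_form n (C \<union> D) \<subseteq> min_reduced_products n C D"
proof
  fix f assume f: "f \<in> canonical_form n (C \<union> D)"
  then obtain \<sigma> \<tau> where pair: "pm_pair n \<sigma> \<tau>" and f_eq: "f = pseudo_mono \<sigma> \<tau>"
    by (rule canonical_formE)
  note fin = pm_pairD[OF pair]
  have min: "minimal_avoiding (C \<union> D) \<sigma> \<tau>"
    using f f_eq pseudo_mono_in_canonical_form_iff[OF _ pair] assms by simp
  obtain \<sigma>' \<tau>' where "\<sigma>' \<subseteq> \<sigma>" "\<tau>' \<subseteq> \<tau>" "pseudo_mono \<sigma>' \<tau>' \<in> reduced_products n C D"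
    "avoids C \<sigma>' \<tau>'" "avoids D \<sigma>' \<tau>'"
    by (rule reduced_product_below[OF assms pair]) (use min in \<open>auto simp: minimal_avoiding_def\<close>)
  with min f_eq have "f \<in> reduced_products n C D"
    by (auto simp: minimal_avoiding_def)
  moreover have "f \<noteq> 0"
    using f_eq pseudo_mono_nonzero[OF fin] by simp
  moreover have "f \<noteq> p * g" if p: "p \<in> reduced_products n C D" and g: "g \<noteq> 1" for p g
  proof
    assume eq: "f = p * g"
    with \<open>f \<noteq> 0\<close> have "p \<noteq> 0" by auto
    then obtain \<sigma>\<^sub>p \<tau>\<^sub>p where pair_p: "pm_pair n \<sigma>\<^sub>p \<tau>\<^sub>p"
      and av_p: "avoids (C \<union> D) \<sigma>\<^sub>p \<tau>\<^sub>p" and p_eq: "p = pseudo_mono \<sigma>\<^sub>p \<tau>\<^sub>p"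
      by (auto elim: reduced_productsE[OF assms p])
    note fin_p = pm_pairD(1,2)[OF pair_p]
    have "pseudo_mono \<sigma> \<tau> = pseudo_mono \<sigma>\<^sub>p \<tau>\<^sub>p * g"
      using eq f_eq p_eq by simp
    then have "\<sigma>\<^sub>p \<subseteq> \<sigma>" "\<tau>\<^sub>p \<subseteq> \<tau>"
      using pseudo_mono_dvd_imp_subset[OF fin_p fin] by blast+
    with min av_p have "p = f"
      using f_eq p_eq by (auto simp: minimal_avoiding_def)
    with eq \<open>f \<noteq> 0\<close> g show False by simp
  qed
  ultimately show "f \<in> min_reduced_products n C D"
    unfolding min_reduced_products_def by blast
qed

text \<open>A pair below an element of \<open>MP\<close> whose box avoids \<open>C \<union> D\<close> contains a reduced product; the
  cofactor is a pseudo-monomial, which minimality in \<open>MP\<close> forces to be 1.\<close>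

lemma min_reduced_products_subset_canonical_form_Un:
  assumes "C \<subseteq> cube n" "D \<subseteq> cube n"
  shows "min_reduced_products n C D \<subseteq> canonical_form n (C \<union> D)"
proof
  fix h assume "h \<in> min_reduced_products n C D"
  then have h: "h \<in> reduced_products n C D" "h \<noteq> 0"
    and h_min: "\<And>f g. f \<in> reduced_products n C D \<Longrightarrow> g \<in> polys n \<Longrightarrow> g \<noteq> 1 \<Longrightarrow> h \<noteq> f * g"
    by (auto simp: min_reduced_products_def)
  obtain \<sigma> \<tau> where pair: "pm_pair n \<sigma> \<tau>" and "avoids C \<sigma> \<tau>" "avoids D \<sigma> \<tau>"
    and h_eq: "h = pseudo_mono \<sigma> \<tau>"
    by (rule reduced_productsE[OF assms h])
  note fin = pm_pairD(1,2)[OF pair]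
  have "\<sigma>' = \<sigma> \<and> \<tau>' = \<tau>" if sub: "\<sigma>' \<subseteq> \<sigma>" "\<tau>' \<subseteq> \<tau>" and av: "avoids (C \<union> D) \<sigma>' \<tau>'" for \<sigma>' \<tau>'
  proof -
    obtain \<sigma>'' \<tau>'' where sub': "\<sigma>'' \<subseteq> \<sigma>'" "\<tau>'' \<subseteq> \<tau>'"
      and P: "pseudo_mono \<sigma>'' \<tau>'' \<in> reduced_products n C D"
      by (rule reduced_product_below[OF assms pm_pair_subset[OF pair sub]]) (use av in auto)
    have "\<sigma>'' \<subseteq> \<sigma>" "\<tau>'' \<subseteq> \<tau>"
      using sub sub' by auto
    then have "h = pseudo_mono \<sigma>'' \<tau>'' * pseudo_mono (\<sigma> - \<sigma>'') (\<tau> - \<tau>'')"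
      using h_eq pseudo_mono_split[OF fin] by simp
    moreover have "pseudo_mono (\<sigma> - \<sigma>'') (\<tau> - \<tau>'') \<in> polys n"
      using pair by (auto intro: pseudo_mono_in_polys pm_pair_subset)
    ultimately have "pseudo_mono (\<sigma> - \<sigma>'') (\<tau> - \<tau>'') = 1"
      using h_min[OF P] by blast
    then have "\<sigma> - \<sigma>'' = {}" "\<tau> - \<tau>'' = {}"
      using fin by (simp_all add: pseudo_mono_eq_one_iff)
    with sub sub' show ?thesis by blast
  qed
  with \<open>avoids C \<sigma> \<tau>\<close> \<open>avoids D \<sigma> \<tau>\<close> have "minimal_avoiding (C \<union> D) \<sigma> \<tau>"
    by (simp add: minimal_avoiding_def)
  then show "h \<in> canonical_form n (C \<union> D)"
    using h_eq pseudo_mono_in_canonical_form_iff[OF _ pair] assms by simp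
qed

lemma reduce_min_reduced_products:
  assumes "C \<subseteq> cube n" "D \<subseteq> cube n"
  shows "reduce n ` min_reduced_products n C D = min_reduced_products n C D"
proof (rule image_cong[OF refl, of _ _ id, simplified])
  fix h assume "h \<in> min_reduced_products n C D"
  then have "h \<in> reduced_products n C D" "h \<noteq> 0"
    by (auto simp: min_reduced_products_def)
  then show "reduce n h = h"
    by (rule reduced_productsE[OF assms]) (simp add: reduce_pseudo_mono)
qed

theorem lemma9:
  fixes n :: nat and C D :: "nat set set"
  assumes "C \<subseteq> cube n" and "D \<subseteq> cube n"
  shows "canonical_form n (C \<union> D) = reduce n ` min_reduced_products n C D"
  using canonical_form_Un_subset_min_reduced_products[OF assms]
    min_reduced_products_subset_canonical_form_Un[OF assms]
  by (simp add: reduce_min_reduced_products[OF assms])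

end
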